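(* Let $w \in \mathfrak{S}_n$ be a prism and let $i \in \textsf{supp}(w)$ be unconfined in the reduced words of $w$, with $i-1 \in \textsf{supp}(w)$ and $i+1 \in \textsf{supp}(w)$. Let $R = \{(a,2) : 0 \le a \le 4\} \cup \{(2,b) : 0 \le b \le 4\}$, $U = \{(a,b) : a \in \{0,1,2\},\ b \in \{3,4\}\}$ and $D = \{(a,b) : a \in \{3,4\},\ b \in \{0,1,2\}\}$. Then $w$ contains at least one of the following calibrated mesh patterns, each with calibration $x_2 = i$ and $y_2 = i$: (a) $(4123, R \cup D)$; (b) $(2341, R \cup U)$; (c) $(3142, R \cup U \cup D)$; (d) $(2413, R \cup U \cup D)$.
   Context: Reduced words, support, Bruhat order: $\sigma_i$ swaps $i,i+1$; a reduced word of $w$ is a minimal-length word $i_1\cdots i_\ell$ with $w=\sigma_{i_1}\cdots\sigma_{i_\ell}$; $\textsf{supp}(w)$ is the set of letters in any reduced word; $u\preceq w$ iff a reduced word of $u$ is a subword of one of $w$; $B(w)=\{u:u\preceq w\}$; $w$ is a prism if $B(w)\cong\mathbf{2}\times X$ for some poset $X$ ($\mathbf{2}$ the two-element chain). A letter $i$ appearing exactly once in a reduced word $s$ is unconfined in $s$ if that occurrence is neither between two $i+1$'s nor between two $i-1$'s; this then holds in all reduced words of $w$. Calibrated mesh patterns: let $p \in \mathfrak{S}_k$ (written in one-line notation) and $M \subseteq \{0,\dots,k\}^2$ (cell $(a,b)$ is the unit square with lower-left corner $(a,b)$ in the grid $[0,k+1]^2$ containing the graph $\{(j,p(j))\}$ of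 $p$). An occurrence of $p$ in $w \in \mathfrak{S}_n$ is a choice of positions $x_1<\cdots<x_k$ such that $w(x_1)\cdots w(x_k)$ is in the same relative order as $p(1)\cdots p(k)$; let $y_1<\cdots<y_k$ be the values $\{w(x_1),\dots,w(x_k)\}$ in increasing order, and set $x_0=y_0=0$, $x_{k+1}=y_{k+1}=n+1$. Such an occurrence is an occurrence of the mesh pattern $(p,M)$ if for every $(a,b)\in M$ there is no $x$ with $x_a < x < x_{a+1}$ and $y_b < w(x) < y_{b+1}$. A calibrated mesh pattern additionally prescribes values for some of the $x_a$ and $y_b$; $w$ contains it if $w$ has an occurrence of $(p,M)$ meeting those prescriptions. *)

theory Defs
  imports "HOL-Combinatorics.Combinatorics" "HOL-Library.Sublist"
begin

definition sigma :: "nat \<Rightarrow> nat \<Rightarrow> nat" where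
  "sigma i = Transposition.transpose i (Suc i)"

definition word_perm :: "nat list \<Rightarrow> nat \<Rightarrow> nat" where
  "word_perm ws = foldr (\<lambda>i f. sigma i \<circ> f) ws id"

definition is_word :: "nat \<Rightarrow> nat list \<Rightarrow> bool" where
  "is_word n ws \<longleftrightarrow> set ws \<subseteq> {1..<n}"

definition reduced_word :: "nat \<Rightarrow> (nat \<Rightarrow> nat) \<Rightarrow> nat list \<Rightarrow> bool" where
  "reduced_word n w ws \<longleftrightarrow> is_word n ws \<and> word_perm ws = w \<and>
     (\<forall>vs. is_word n vs \<and> word_perm vs = w \<longrightarrow> length ws \<le> length vs)"

definition supp :: "nat \<Rightarrow> (nat \<Rightarrow> nat) \<Rightarrow> nat set" where
  "supp n w = (\<Union>{set ws | ws. reduced_word n w ws})"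

definition bruhat_le :: "nat \<Rightarrow> (nat \<Rightarrow> nat) \<Rightarrow> (nat \<Rightarrow> nat) \<Rightarrow> bool" where
  "bruhat_le n u w \<longleftrightarrow> (\<exists>su sw. reduced_word n u su \<and> reduced_word n w sw \<and> subseq su sw)"

definition bruhat_interval :: "nat \<Rightarrow> (nat \<Rightarrow> nat) \<Rightarrow> (nat \<Rightarrow> nat) set" where
  "bruhat_interval n w = {u. u permutes {1..n} \<and> bruhat_le n u w}"

definition partial_order_on_set :: "'a set \<Rightarrow> ('a \<Rightarrow> 'a \<Rightarrow> bool) \<Rightarrow> bool" where
  "partial_order_on_set X le \<longleftrightarrow>
     (\<forall>x\<in>X. le x x) \<and>
     (\<forall>x\<in>X. \<forall>y\<in>X. le x y \<and> le y x \<longrightarrow> x = y) \<and>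
     (\<forall>x\<in>X. \<forall>y\<in>X. \<forall>z\<in>X. le x y \<and> le y z \<longrightarrow> le x z)"

text \<open>w is a prism if B(w) is isomorphic (as a poset, under Bruhat order) to 2 x X for
  some poset X; 2 = {False < True}, product order.  Since B(w) is finite, X may be taken
  with carrier a set of natural numbers.\<close>
definition prism :: "nat \<Rightarrow> (nat \<Rightarrow> nat) \<Rightarrow> bool" where
  "prism n w \<longleftrightarrow> (\<exists>(X :: nat set) (leX :: nat \<Rightarrow> nat \<Rightarrow> bool) (f :: (nat \<Rightarrow> nat) \<Rightarrow> bool \<times> nat).
     partial_order_on_set X leX \<and>
     bij_betw f (bruhat_interval n w) (UNIV \<times> X) \<and>
     (\<forall>u\<in>bruhat_interval n w. \<forall>v\<in>bruhat_interval n w.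
        bruhat_le n u v \<longleftrightarrow> (fst (f u) \<le> fst (f v) \<and> leX (snd (f u)) (snd (f v)))))"

definition unconfined_in :: "nat \<Rightarrow> nat list \<Rightarrow> bool" where
  "unconfined_in i s \<longleftrightarrow> count_list s i = 1 \<and>
     (\<forall>p < length s. s ! p = i \<longrightarrow>
        \<not> (\<exists>a b. a < p \<and> p < b \<and> b < length s \<and> s ! a = Suc i \<and> s ! b = Suc i) \<and>
        \<not> (\<exists>a b. a < p \<and> p < b \<and> b < length s \<and> s ! a = i - 1 \<and> s ! b = i - 1))"

definition contains_cal_mesh ::
  "nat \<Rightarrow> (nat \<Rightarrow> nat) \<Rightarrow> nat list \<Rightarrow> (nat \<times> nat) set \<Rightarrow> (nat \<times> nat) set \<Rightarrow> (nat \<times> nat) set \<Rightarrow> bool" where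
  "contains_cal_mesh n w p M CX CY \<longleftrightarrow> (let k = length p in
     \<exists>x y :: nat \<Rightarrow> nat.
       x 0 = 0 \<and> x (Suc k) = Suc n \<and> y 0 = 0 \<and> y (Suc k) = Suc n \<and>
       (\<forall>j\<in>{1..k}. 1 \<le> x j \<and> x j \<le> n) \<and>
       (\<forall>j\<in>{1..<k}. x j < x (Suc j)) \<and>
       (\<forall>j\<in>{1..k}. \<forall>l\<in>{1..k}. w (x j) < w (x l) \<longleftrightarrow> p ! (j - 1) < p ! (l - 1)) \<and>
       (\<forall>j\<in>{1..<k}. y j < y (Suc j)) \<and>
       y ` {1..k} = (\<lambda>j. w (x j)) ` {1..k} \<and>
       (\<forall>(a, b)\<in>M. \<not> (\<exists>z. x a < z \<and> z < x (Suc a) \<and> y b < w z \<and> w z < y (Suc b))) \<and>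
       (\<forall>(a, v)\<in>CX. x a = v) \<and> (\<forall>(b, v)\<in>CY. y b = v))"

definition meshR :: "(nat \<times> nat) set" where
  "meshR = {(a, 2) | a. a \<le> 4} \<union> {(2, b) | b. b \<le> 4}"

definition meshU :: "(nat \<times> nat) set" where
  "meshU = {(a, b) | a b. a \<in> {0, 1, 2} \<and> b \<in> {3, 4}}"

definition meshD :: "(nat \<times> nat) set" where
  "meshD = {(a, b) | a b. a \<in> {3, 4} \<and> b \<in> {0, 1, 2}}"

end

theory Submission
  imports Defs
begin

text \<open>Split a reduced word of \<open>w\<close> at its only letter \<open>i\<close>: \<open>w = u \<sigma>\<^sub>i v\<close> where \<open>u\<close> and \<open>v\<close>
  map \<open>{1..i}\<close> onto itself. Hence exactly one position \<open>p \<le> i\<close> has a value above \<open>i\<close> and exactly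
  one position \<open>q > i\<close> has a value at most \<open>i\<close>, namely \<open>p = v\<^sup>-\<^sup>1(i)\<close> and \<open>q = v\<^sup>-\<^sup>1(i+1)\<close>,
  with \<open>w(p) = u(i+1)\<close> and \<open>w(q) = u(i)\<close>. As \<open>i\<close> is unconfined, \<open>i+1\<close> is missing from \<open>u\<close> or
  from \<open>v\<close>, so \<open>q = i+1\<close> or \<open>w(p) = i+1\<close>; likewise \<open>p = i\<close> or \<open>w(q) = i\<close>.

  Since reduced words have as many letters as \<open>w\<close> has inversions, every letter \<open>j\<close> of a
  reduced word makes some value above \<open>j\<close> precede some value at most \<open>j\<close>. For \<open>j = i+1\<close> and
  \<open>j = i-1\<close> this excludes \<open>q = w(p) = i+1\<close> and \<open>p = w(q) = i\<close>. Each of the four remaining cases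
  gives one of the patterns at positions \<open>x\<^sub>1 < i < i+1 < x\<^sub>4\<close>: a point in a shaded cell would
  cross level \<open>i\<close>, so it would be \<open>p\<close> or \<open>q\<close>, but these are points of the occurrence.\<close>

lemma word_perm_Nil [simp]: "word_perm [] = id"
  by (simp add: word_perm_def)

lemma word_perm_Cons [simp]: "word_perm (k # ws) = sigma k \<circ> word_perm ws"
  by (simp add: word_perm_def)

lemma word_perm_append: "word_perm (xs @ ys) = word_perm xs \<circ> word_perm ys"
  by (induction xs) auto

lemma is_word_Cons [simp]: "is_word n (k # ws) \<longleftrightarrow> 1 \<le> k \<and> k < n \<and> is_word n ws"
  by (auto simp: is_word_def)

lemma sigma_permutes: "1 \<le> k \<Longrightarrow> k < n \<Longrightarrow> sigma k permutes {1..n}"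
  unfolding sigma_def by (rule permutes_swap_id) auto

lemma sigma_involutory [simp]: "sigma k (sigma k x) = x"
  by (simp add: sigma_def)

lemma sigma_le_iff: "k \<noteq> j \<Longrightarrow> sigma k x \<le> j \<longleftrightarrow> x \<le> j"
  by (auto simp: sigma_def transpose_def)

lemma sigma_less_sigma_iff:
  assumes "\<not> (u = k \<and> v = Suc k)" "\<not> (u = Suc k \<and> v = k)"
  shows "sigma k u < sigma k v \<longleftrightarrow> u < v"
  using assms by (auto simp: sigma_def transpose_def)

lemma word_perm_permutes: "is_word n ws \<Longrightarrow> word_perm ws permutes {1..n}"
proof (induction ws)
  case (Cons k ws)
  then have "1 \<le> k" "k < n" "word_perm ws permutes {1..n}"
    by auto
  then show ?case
    unfolding word_perm_Cons by (intro permutes_compose sigma_permutes)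
qed simp

lemma word_perm_le_iff: "j \<notin> set ws \<Longrightarrow> word_perm ws x \<le> j \<longleftrightarrow> x \<le> j"
  by (induction ws) (auto simp: sigma_le_iff)

lemma word_perm_fixed: "(\<And>k. k \<in> set ws \<Longrightarrow> k \<noteq> x \<and> Suc k \<noteq> x) \<Longrightarrow> word_perm ws x = x"
  by (induction ws) (auto simp: sigma_def transpose_def)

definition inversions :: "nat \<Rightarrow> (nat \<Rightarrow> nat) \<Rightarrow> (nat \<times> nat) set" where
  "inversions n f = {(x, y). 1 \<le> x \<and> x < y \<and> y \<le> n \<and> f y < f x}"

definition num_inversions :: "nat \<Rightarrow> (nat \<Rightarrow> nat) \<Rightarrow> nat" where
  "num_inversions n f = card (inversions n f)"

lemma mem_inversions_iff:
  "(x, y) \<in> inversions n f \<longleftrightarrow> 1 \<le> x \<and> x < y \<and> y \<le> n \<and> f y < f x"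
  by (simp add: inversions_def)

lemma finite_inversions: "finite (inversions n f)"
  by (rule finite_subset[of _ "{1..n} \<times> {1..n}"]) (auto simp: inversions_def)

lemma num_inversions_id [simp]: "num_inversions n id = 0"
proof -
  have "inversions n id = {}"
    by (auto simp: mem_inversions_iff)
  then show ?thesis
    by (simp add: num_inversions_def)
qed

lemma inversions_sigma_comp:
  assumes f: "f permutes {1..n}" and k: "1 \<le> k" "k < n"
    and a: "f a = k" and b: "f b = Suc k" and "a < b"
  shows "inversions n (sigma k \<circ> f) = insert (a, b) (inversions n f)"
    and "(a, b) \<notin> inversions n f"
proof -
  have f_eqD: "f u = f v \<Longrightarrow> u = v" for u v
    using permutes_inj[OF f] by (rule injD)
  have "k \<in> {1..n}" "Suc k \<in> {1..n}"
    using k by simp_all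
  then have "a \<in> {1..n}" "b \<in> {1..n}"
    using permutes_in_image[OF f] a b by metis+
  moreover have "sigma k (f b) < sigma k (f a)"
    unfolding a b by (simp add: sigma_def)
  ultimately have new: "(a, b) \<in> inversions n (sigma k \<circ> f)"
    using \<open>a < b\<close> by (simp add: mem_inversions_iff)
  have order_kept: "sigma k (f y) < sigma k (f x) \<longleftrightarrow> f y < f x"
    if "x < y" "(x, y) \<noteq> (a, b)" for x y
  proof (rule sigma_less_sigma_iff)
    show "\<not> (f y = k \<and> f x = Suc k)"
    proof
      assume "f y = k \<and> f x = Suc k"
      then have "y = a" "x = b"
        using a b f_eqD by metis+
      then show False
        using \<open>x < y\<close> \<open>a < b\<close> by simp
    qed
    show "\<not> (f y = Suc k \<and> f x = k)"
    proof
      assume "f y = Suc k \<and> f x = k"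
      then have "y = b" "x = a"
        using a b f_eqD by metis+
      then show False
        using \<open>(x, y) \<noteq> (a, b)\<close> by simp
    qed
  qed
  have unchanged: "pr \<in> inversions n (sigma k \<circ> f) \<longleftrightarrow> pr \<in> inversions n f"
    if "pr \<noteq> (a, b)" for pr
  proof -
    obtain x y where pr: "pr = (x, y)"
      by fastforce
    show ?thesis
      unfolding pr mem_inversions_iff comp_apply using order_kept that pr by blast
  qed
  show "inversions n (sigma k \<circ> f) = insert (a, b) (inversions n f)"
  proof (rule set_eqI)
    show "pr \<in> inversions n (sigma k \<circ> f) \<longleftrightarrow> pr \<in> insert (a, b) (inversions n f)" for pr
      using new unchanged[of pr] by (cases "pr = (a, b)") simp_all
  qed
  show "(a, b) \<notin> inversions n f"
    using a b by (simp add: mem_inversions_iff)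
qed


lemma num_inversions_sigma_comp:
  assumes f: "f permutes {1..n}" and k: "1 \<le> k" "k < n"
  shows "inv f k < inv f (Suc k) \<and> num_inversions n (sigma k \<circ> f) = Suc (num_inversions n f) \<or>
         inv f (Suc k) < inv f k \<and> Suc (num_inversions n (sigma k \<circ> f)) = num_inversions n f"
proof -
  have ascent: "num_inversions n (sigma k \<circ> g) = Suc (num_inversions n g)"
    if g: "g permutes {1..n}" and "inv g k < inv g (Suc k)" for g
    using inversions_sigma_comp[OF g k _ _ \<open>inv g k < inv g (Suc k)\<close>] finite_inversions
    by (simp add: num_inversions_def permutes_inverses[OF g])
  have "inv f k \<noteq> inv f (Suc k)"
    using permutes_inverses(1)[OF f] by (metis n_not_Suc_n)
  moreover have "Suc (num_inversions n (sigma k \<circ> f)) = num_inversions n f"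
    if "inv f (Suc k) < inv f k"
  proof -
    let ?g = "sigma k \<circ> f"
    have g: "?g permutes {1..n}"
      using f k by (intro permutes_compose sigma_permutes)
    have "inv ?g k = inv f (Suc k)" "inv ?g (Suc k) = inv f k"
      using f g by (simp_all add: permutes_inv_eq permutes_inverses sigma_def)
    then have "num_inversions n (sigma k \<circ> ?g) = Suc (num_inversions n ?g)"
      using ascent[OF g] that by simp
    moreover have "sigma k \<circ> ?g = f"
      by (simp add: fun_eq_iff)
    ultimately show ?thesis
      by simp
  qed
  ultimately show ?thesis
    using ascent[OF f] by (meson linorder_neqE_nat)
qed

lemma num_inversions_word_perm_le: "is_word n ws \<Longrightarrow> num_inversions n (word_perm ws) \<le> length ws"
proof (induction ws)
  case (Cons k ws)
  then have k: "1 \<le> k" "k < n" and ws: "is_word n ws"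
    by auto
  have "num_inversions n (sigma k \<circ> word_perm ws) \<le> Suc (num_inversions n (word_perm ws))"
    using num_inversions_sigma_comp[OF word_perm_permutes[OF ws] k] by auto
  then show ?case
    using Cons.IH ws by (simp add: comp_def)
qed simp

lemma permutes_descent:
  assumes g: "g permutes {1..n}" and "g \<noteq> id"
  shows "\<exists>k. 1 \<le> k \<and> k < n \<and> g (Suc k) < g k"
proof (rule ccontr)
  assume no_descent: "\<not> ?thesis"
  have ascent: "g k < g (Suc k)" if "1 \<le> k" "k < n" for k
    using that no_descent permutes_inj[OF g] by (metis injD linorder_neqE_nat n_not_Suc_n)
  have "j \<le> g j" if "j \<in> {1..n}" for j
    using that
  proof (induction j)
    case (Suc j)
    then show ?case
      using ascent[of j] permutes_in_image[OF g, of 1] by (cases "j = 0") fastforce+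
  qed simp
  then have "g = id"
    using permutes_natset_ge[OF g] by blast
  with \<open>g \<noteq> id\<close> show False ..
qed

lemma exists_word_of_length_num_inversions:
  "f permutes {1..n} \<Longrightarrow> \<exists>ws. is_word n ws \<and> word_perm ws = f \<and> length ws = num_inversions n f"
proof (induction "num_inversions n f" arbitrary: f rule: less_induct)
  case less
  show ?case
  proof (cases "f = id")
    case True
    then show ?thesis
      by (intro exI[of _ "[]"]) (simp add: is_word_def)
  next
    case False
    then have "inv f \<noteq> id"
      by (metis inv_id inv_inv_eq less.prems permutes_bij)
    then obtain k where k: "1 \<le> k" "k < n" "inv f (Suc k) < inv f k"
      using permutes_descent[OF permutes_inv[OF less.prems]] by blast
    let ?g = "sigma k \<circ> f"
    have shorter: "Suc (num_inversions n ?g) = num_inversions n f"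
      using num_inversions_sigma_comp[OF less.prems k(1,2)] k(3) by auto
    have "?g permutes {1..n}"
      using less.prems k by (intro permutes_compose sigma_permutes)
    then obtain ws where "is_word n ws" "word_perm ws = ?g" "length ws = num_inversions n ?g"
      using less.hyps shorter by (metis lessI)
    then show ?thesis
      using k shorter by (intro exI[of _ "k # ws"]) (auto simp: fun_eq_iff)
  qed
qed

lemma reduced_word_length:
  assumes "reduced_word n w ws"
  shows "length ws = num_inversions n w"
proof -
  have ws: "is_word n ws" "word_perm ws = w"
    using assms by (auto simp: reduced_word_def)
  obtain vs where "is_word n vs" "word_perm vs = w" "length vs = num_inversions n w"
    using exists_word_of_length_num_inversions[OF word_perm_permutes] ws by blast
  then show ?thesis
    using assms num_inversions_word_perm_le[OF ws(1)] ws(2)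
    by (fastforce simp: reduced_word_def intro: le_antisym)
qed

definition crosses_level :: "nat \<Rightarrow> (nat \<Rightarrow> nat) \<Rightarrow> bool" where
  "crosses_level j f \<longleftrightarrow> (\<exists>x y. x < y \<and> j < f x \<and> f y \<le> j)"

lemma crosses_level_word_perm:
  assumes "is_word n ws" "num_inversions n (word_perm ws) = length ws" "j \<in> set ws"
  shows "crosses_level j (word_perm ws)"
  using assms
proof (induction ws)
  case (Cons k ws)
  let ?f = "word_perm ws"
  have k: "1 \<le> k" "k < n" and ws: "is_word n ws"
    using Cons.prems(1) by auto
  have f: "?f permutes {1..n}"
    using word_perm_permutes[OF ws] .
  have "num_inversions n (sigma k \<circ> ?f) = Suc (length ws)"
    using Cons.prems(2) by (simp only: word_perm_Cons length_Cons)
  then have ascent: "inv ?f k < inv ?f (Suc k)" and tight: "num_inversions n ?f = length ws"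
    using num_inversions_sigma_comp[OF f k] num_inversions_word_perm_le[OF ws] by auto
  show ?case
  proof (cases "k = j")
    case True
    have "(sigma k \<circ> ?f) (inv ?f k) = Suc k" "(sigma k \<circ> ?f) (inv ?f (Suc k)) = k"
      by (simp_all add: permutes_inverses[OF f] sigma_def)
    then show ?thesis
      using ascent True unfolding crosses_level_def word_perm_Cons
      by (metis le_refl lessI)
  next
    case False
    then have "crosses_level j ?f"
      using Cons.IH Cons.prems(3) ws tight by simp
    then obtain x y where "x < y" "j < ?f x" "?f y \<le> j"
      unfolding crosses_level_def by blast
    then show ?thesis
      unfolding crosses_level_def word_perm_Cons comp_apply
      using sigma_le_iff[OF False] by (metis not_le)
  qed
qed simp

lemma crosses_level_if_in_supp:
  assumes "j \<in> supp n w"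
  shows "crosses_level j w"
proof -
  obtain ws where ws: "reduced_word n w ws" "j \<in> set ws"
    using assms by (auto simp: supp_def)
  then have "is_word n ws" "word_perm ws = w"
    by (auto simp: reduced_word_def)
  then show ?thesis
    using crosses_level_word_perm reduced_word_length[OF ws(1)] ws(2) by metis
qed

lemma not_crosses_level_if_maps_into:
  assumes "inj f" and into: "\<And>x. x \<le> j \<Longrightarrow> f x \<le> j"
  shows "\<not> crosses_level j f"
proof
  assume "crosses_level j f"
  then obtain x y where xy: "x < y" "j < f x" "f y \<le> j"
    unfolding crosses_level_def by blast
  have "f ` {..j} = {..j}"
    using into by (intro endo_inj_surj) (auto intro: inj_on_subset[OF \<open>inj f\<close>])
  then obtain z where "z \<le> j" "f z = f y"
    using \<open>f y \<le> j\<close> by (metis atMost_iff imageE)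
  then have "y \<le> j"
    using \<open>inj f\<close> by (metis injD)
  then show False
    using xy into[of x] by simp
qed

lemma all_less_four: "(\<forall>j<4. P j) \<longleftrightarrow> P 0 \<and> P 1 \<and> P 2 \<and> P (3::nat)"
  by (auto simp: less_Suc_eq numeral_eq_Suc)

locale single_crossing =
  fixes n i p q :: nat and w :: "nat \<Rightarrow> nat"
  assumes permutes: "w permutes {1..n}"
    and p_le: "p \<le> i" and less_w_p: "i < w p"
    and less_q: "i < q" and w_q_le: "w q \<le> i"
    and up_crossing_unique: "\<And>x. x \<le> i \<Longrightarrow> i < w x \<Longrightarrow> x = p"
    and down_crossing_unique: "\<And>x. i < x \<Longrightarrow> w x \<le> i \<Longrightarrow> x = q"
begin

lemma w_eq_iff: "w x = w y \<longleftrightarrow> x = y"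
  using permutes_inj[OF permutes] by (auto dest: injD)

lemma w_inv: "w (inv w y) = y"
  using permutes_inverses(1)[OF permutes] .

lemma in_range_iff: "w x \<in> {1..n} \<longleftrightarrow> x \<in> {1..n}"
  using permutes_in_image[OF permutes] .

lemma w_le_if: "x \<le> i \<Longrightarrow> x \<noteq> p \<Longrightarrow> w x \<le> i"
  using up_crossing_unique by force

lemma less_w_if: "i < x \<Longrightarrow> x \<noteq> q \<Longrightarrow> i < w x"
  using down_crossing_unique by force

lemma moved_in_range: "w x \<noteq> x \<Longrightarrow> x \<in> {1..n}"
  using permutes_not_in[OF permutes] by blast

lemma p_ge_1: "1 \<le> p"
  using moved_in_range[of p] p_le less_w_p by simp

lemma q_le_n: "q \<le> n"
  using moved_in_range[of q] less_q w_q_le by simp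

lemma contains_cal_mesh_around:
  assumes "length P = 4"
    and l: "1 \<le> l" "l < i" and r: "Suc i < r" "r \<le> n"
    and p: "p = l \<or> p = i" and q: "q = Suc i \<or> q = r"
    and y: "lo < i" "Suc i < hi" "{w l, w i, w (Suc i), w r} = {lo, i, Suc i, hi}"
    and order: "\<forall>j<4. \<forall>k<4. w ([l, i, Suc i, r] ! j) < w ([l, i, Suc i, r] ! k) \<longleftrightarrow> P ! j < P ! k"
    and M: "M \<subseteq> meshR \<union> meshU \<union> meshD"
  shows "contains_cal_mesh n w P M {(2, i)} {(2, i)}"
proof -
  define x where "x j = [0, l, i, Suc i, r, Suc n] ! j" for j
  define y where "y j = [0, lo, i, Suc i, hi, Suc n] ! j" for j
  have one_to_four: "{1..4::nat} = {1, 2, 3, 4}" "{1..<4::nat} = {1, 2, 3}"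
    by auto
  have positions: "\<forall>j\<in>{1..4}. 1 \<le> x j \<and> x j \<le> n"
    using l r unfolding one_to_four by (simp add: x_def)
  have x_mono: "\<forall>j\<in>{1..<4}. x j < x (Suc j)"
    using l r unfolding one_to_four by (simp add: x_def)
  have y_mono: "\<forall>j\<in>{1..<4}. y j < y (Suc j)"
    using y unfolding one_to_four by (simp add: y_def)
  have same_values: "y ` {1..4} = (\<lambda>j. w (x j)) ` {1..4}"
    using y unfolding one_to_four by (simp add: x_def y_def)
  have pattern: "\<forall>j\<in>{1..4}. \<forall>k\<in>{1..4}. w (x j) < w (x k) \<longleftrightarrow> P ! (j - 1) < P ! (k - 1)"
    using order unfolding one_to_four by (simp add: x_def all_less_four)
  have cell_empty: "\<not> (x a < z \<and> z < x (Suc a) \<and> y b < w z \<and> w z < y (Suc b))"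
    if cell: "(a, b) \<in> meshR \<union> meshU \<union> meshD" for a b z
  proof
    assume z: "x a < z \<and> z < x (Suc a) \<and> y b < w z \<and> w z < y (Suc b)"
    consider (column) "a = 2" | (row) "b = 2"
      | (upper) "a \<in> {0, 1, 2}" "b \<in> {3, 4}" | (lower) "a \<in> {3, 4}" "b \<in> {0, 1, 2}"
      using cell by (auto simp: meshR_def meshU_def meshD_def)
    then show False
    proof cases
      case column
      then show ?thesis
        using z by (auto simp: x_def)
    next
      case row
      then show ?thesis
        using z by (auto simp: y_def)
    next
      case upper
      then have "z \<le> i" "i < w z"
        using z l y by (auto simp: x_def y_def)
      then have "z = p"
        by (rule up_crossing_unique)
      then show ?thesis
        using upper z p l by (auto simp: x_def)
    next
      case lower
      then have "i < z" "w z \<le> i"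
        using z r y by (auto simp: x_def y_def)
      then have "z = q"
        by (rule down_crossing_unique)
      then show ?thesis
        using lower z q r by (auto simp: x_def)
    qed
  qed
  have mesh: "\<forall>(a, b)\<in>M. \<not> (\<exists>z. x a < z \<and> z < x (Suc a) \<and> y b < w z \<and> w z < y (Suc b))"
    using cell_empty M by blast
  show ?thesis
    unfolding contains_cal_mesh_def Let_def \<open>length P = 4\<close>
    using positions x_mono pattern y_mono same_values mesh
    by (intro exI[of _ x] exI[of _ y]) (simp add: x_def y_def)
qed

lemma contains_4123:
  assumes "q = Suc i" "w q = i" "p \<noteq> i" "w p \<noteq> Suc i" "M \<subseteq> meshR \<union> meshU \<union> meshD"
  shows "contains_cal_mesh n w [4, 1, 2, 3] M {(2, i)} {(2, i)}"
proof -
  let ?r = "inv w (Suc i)"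
  have "w i < i"
    using w_le_if[of i] w_eq_iff[of i q] assms less_q by force
  have "?r \<noteq> p" "?r \<noteq> q"
    using w_inv[of "Suc i"] assms by auto
  then have "Suc i < ?r"
    using w_inv[of "Suc i"] up_crossing_unique[of ?r] assms(1) by fastforce
  moreover have "?r \<le> n"
    using in_range_iff[of ?r] w_inv[of "Suc i"] q_le_n assms(1) by simp
  ultimately show ?thesis
    using assms p_le less_w_p p_ge_1 \<open>w i < i\<close> w_inv[of "Suc i"]
    by (intro contains_cal_mesh_around[where l = p and r = ?r and lo = "w i" and hi = "w p"])
      (auto simp: all_less_four insert_commute)
qed

lemma contains_2341:
  assumes "p = i" "w p = Suc i" "w q \<noteq> i" "q \<noteq> Suc i" "M \<subseteq> meshR \<union> meshU \<union> meshD"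
  shows "contains_cal_mesh n w [2, 3, 4, 1] M {(2, i)} {(2, i)}"
proof -
  let ?r = "inv w i"
  have "Suc i < w (Suc i)"
    using less_w_if[of "Suc i"] w_eq_iff[of "Suc i" p] assms p_le by force
  have "?r \<noteq> p" "?r \<noteq> q"
    using w_inv[of i] assms by auto
  then have "?r < i"
    using w_inv[of i] down_crossing_unique[of ?r] assms(1) by fastforce
  moreover have "1 \<le> ?r"
    using in_range_iff[of ?r] w_inv[of i] p_ge_1 q_le_n assms(1) less_q by simp
  ultimately show ?thesis
    using assms less_q w_q_le q_le_n \<open>Suc i < w (Suc i)\<close> w_inv[of i]
    by (intro contains_cal_mesh_around[where l = ?r and r = q and lo = "w q" and hi = "w (Suc i)"])
      (auto simp: all_less_four insert_commute)
qed

lemma contains_3142: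
  assumes "w p = Suc i" "w q = i" "p \<noteq> i" "q \<noteq> Suc i" "M \<subseteq> meshR \<union> meshU \<union> meshD"
  shows "contains_cal_mesh n w [3, 1, 4, 2] M {(2, i)} {(2, i)}"
proof -
  have "w i < i"
    using w_le_if[of i] w_eq_iff[of i q] assms less_q by force
  moreover have "Suc i < w (Suc i)"
    using less_w_if[of "Suc i"] w_eq_iff[of "Suc i" p] assms p_le by force
  ultimately show ?thesis
    using assms p_le p_ge_1 less_q q_le_n
    by (intro contains_cal_mesh_around[where l = p and r = q and lo = "w i" and hi = "w (Suc i)"])
      (auto simp: all_less_four insert_commute)
qed

lemma contains_2413:
  assumes "p = i" "q = Suc i" "w p \<noteq> Suc i" "w q \<noteq> i" "M \<subseteq> meshR \<union> meshU \<union> meshD"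
  shows "contains_cal_mesh n w [2, 4, 1, 3] M {(2, i)} {(2, i)}"
proof -
  let ?r = "inv w i" and ?s = "inv w (Suc i)"
  have "?r \<noteq> p" "?r \<noteq> q" "?s \<noteq> p" "?s \<noteq> q"
    using w_inv[of i] w_inv[of "Suc i"] assms less_w_p w_q_le by auto
  then have "?r < i" "Suc i < ?s"
    using w_inv[of i] w_inv[of "Suc i"] down_crossing_unique[of ?r] up_crossing_unique[of ?s] assms(1,2)
    by fastforce+
  moreover have "1 \<le> ?r" "?s \<le> n"
    using in_range_iff[of ?r] in_range_iff[of ?s] w_inv[of i] w_inv[of "Suc i"] p_ge_1 q_le_n assms(1,2)
    by simp_all
  ultimately show ?thesis
    using assms less_w_p w_q_le w_inv[of i] w_inv[of "Suc i"]
    by (intro contains_cal_mesh_around[where l = ?r and r = ?s and lo = "w q" and hi = "w p"])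
      (auto simp: all_less_four insert_commute)
qed

lemma not_crosses_above:
  assumes "q = Suc i" "w p = Suc i"
  shows "\<not> crosses_level (Suc i) w"
proof (rule not_crosses_level_if_maps_into)
  show "inj w"
    using permutes_inj[OF permutes] .
  show "w x \<le> Suc i" if "x \<le> Suc i" for x
    using that w_le_if[of x] assms w_q_le by (cases "x = Suc i") (auto simp: le_Suc_eq)
qed

lemma not_crosses_below:
  assumes "p = i" "w q = i"
  shows "\<not> crosses_level (i - 1) w"
proof (rule not_crosses_level_if_maps_into)
  show "inj w"
    using permutes_inj[OF permutes] .
  show "w x \<le> i - 1" if "x \<le> i - 1" for x
  proof -
    have "x \<noteq> p" "x \<noteq> q"
      using that assms p_ge_1 less_q by auto
    then show ?thesis
      using w_le_if[of x] w_eq_iff[of x q] that assms by fastforce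
  qed
qed

lemma contains_one_of_four_patterns:
  assumes "q = Suc i \<or> w p = Suc i" "p = i \<or> w q = i"
    and "crosses_level (Suc i) w" "crosses_level (i - 1) w"
  shows "contains_cal_mesh n w [4, 1, 2, 3] (meshR \<union> meshD) {(2, i)} {(2, i)} \<or>
         contains_cal_mesh n w [2, 3, 4, 1] (meshR \<union> meshU) {(2, i)} {(2, i)} \<or>
         contains_cal_mesh n w [3, 1, 4, 2] (meshR \<union> meshU \<union> meshD) {(2, i)} {(2, i)} \<or>
         contains_cal_mesh n w [2, 4, 1, 3] (meshR \<union> meshU \<union> meshD) {(2, i)} {(2, i)}"
proof -
  have "\<not> (q = Suc i \<and> w p = Suc i)" "\<not> (p = i \<and> w q = i)"
    using not_crosses_above not_crosses_below assms(3,4) by blast+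
  then show ?thesis
    using assms(1,2) contains_4123[of "meshR \<union> meshD"] contains_2341[of "meshR \<union> meshU"]
      contains_3142[of "meshR \<union> meshU \<union> meshD"] contains_2413[of "meshR \<union> meshU \<union> meshD"]
    by blast
qed

end

lemma unconfined_in_not_sandwiched:
  assumes "unconfined_in i s" "p < length s" "s ! p = i"
  shows "\<not> (\<exists>u v. u < p \<and> p < v \<and> v < length s \<and> s ! u = Suc i \<and> s ! v = Suc i)"
    and "\<not> (\<exists>u v. u < p \<and> p < v \<and> v < length s \<and> s ! u = i - 1 \<and> s ! v = i - 1)"
  using assms unfolding unconfined_in_def by blast+

lemma unconfined_in_append_Cons:
  assumes "unconfined_in i (a @ i # b)"
  shows "i \<notin> set a" "i \<notin> set b"
    and "Suc i \<notin> set a \<or> Suc i \<notin> set b" "i - 1 \<notin> set a \<or> i - 1 \<notin> set b"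
proof -
  let ?s = "a @ i # b"
  have "count_list ?s i = 1"
    using assms unfolding unconfined_in_def by (rule conjunct1)
  then have "count_list a i = 0" "count_list b i = 0"
    by simp_all
  then show "i \<notin> set a" "i \<notin> set b"
    using count_list_0_iff by metis+
  have sandwich: "\<exists>u v. u < length a \<and> length a < v \<and> v < length ?s \<and> ?s ! u = j \<and> ?s ! v = j"
    if in_a: "j \<in> set a" and in_b: "j \<in> set b" for j
  proof -
    obtain u where "u < length a" "a ! u = j"
      using in_a unfolding in_set_conv_nth by blast
    moreover obtain v where "v < length b" "b ! v = j"
      using in_b unfolding in_set_conv_nth by blast
    ultimately show ?thesis
      by (intro exI[of _ u] exI[of _ "length a + Suc v"]) (simp add: nth_append)
  qed
  have "length a < length ?s" "?s ! length a = i"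
    by simp_all
  note unsandwiched = unconfined_in_not_sandwiched[OF assms this]
  then show "Suc i \<notin> set a \<or> Suc i \<notin> set b" "i - 1 \<notin> set a \<or> i - 1 \<notin> set b"
    using sandwich by blast+
qed

lemma single_crossing_word_perm:
  assumes "is_word n (a @ i # b)" "i \<notin> set a" "i \<notin> set b"
  shows "single_crossing n i (inv (word_perm b) i) (inv (word_perm b) (Suc i)) (word_perm (a @ i # b))"
proof -
  let ?U = "word_perm a" and ?V = "word_perm b"
  have V: "?V permutes {1..n}"
    using assms(1) by (intro word_perm_permutes) (simp add: is_word_def)
  have w: "word_perm (a @ i # b) x = ?U (sigma i (?V x))" for x
    by (simp add: word_perm_append)
  have U_le: "?U x \<le> i \<longleftrightarrow> x \<le> i" and V_le: "?V x \<le> i \<longleftrightarrow> x \<le> i" for x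
    using word_perm_le_iff assms(2,3) by blast+
  have V_inv: "?V (inv ?V y) = y" and V_eq: "?V x = y \<longleftrightarrow> x = inv ?V y" for x y
    using permutes_inverses(1)[OF V] permutes_inv_eq[OF V] by metis+
  have sigma_other: "y \<noteq> i \<Longrightarrow> y \<noteq> Suc i \<Longrightarrow> sigma i y = y" for y
    by (simp add: sigma_def)
  show ?thesis
  proof unfold_locales
    show "word_perm (a @ i # b) permutes {1..n}"
      using word_perm_permutes[OF assms(1)] .
    show "inv ?V i \<le> i" "i < inv ?V (Suc i)"
      using V_le V_inv by (metis le_refl, metis Suc_n_not_le_n not_le)
    show "i < word_perm (a @ i # b) (inv ?V i)" "word_perm (a @ i # b) (inv ?V (Suc i)) \<le> i"
      using U_le[of "Suc i"] U_le[of i] by (simp_all add: w V_inv sigma_def)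
    show "x = inv ?V i" if "x \<le> i" "i < word_perm (a @ i # b) x" for x
    proof -
      have "?V x \<le> i"
        using V_le that(1) by blast
      have "?V x = i"
      proof (rule ccontr)
        assume "?V x \<noteq> i"
        then have "sigma i (?V x) = ?V x"
          using \<open>?V x \<le> i\<close> sigma_other by simp
        then show False
          using that(2) U_le[of "?V x"] \<open>?V x \<le> i\<close> by (simp add: w)
      qed
      then show ?thesis
        using V_eq by blast
    qed
    show "x = inv ?V (Suc i)" if "i < x" "word_perm (a @ i # b) x \<le> i" for x
    proof -
      have "i < ?V x"
        using V_le that(1) by (meson not_le)
      have "?V x = Suc i"
      proof (rule ccontr)
        assume "?V x \<noteq> Suc i"
        then have "sigma i (?V x) = ?V x"
          using \<open>i < ?V x\<close> sigma_other by simp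
        then show False
          using that(2) U_le[of "?V x"] \<open>i < ?V x\<close> by (simp add: w)
      qed
      then show ?thesis
        using V_eq by blast
    qed
  qed
qed

lemma single_crossing_if_unconfined:
  assumes "reduced_word n w s" "i \<in> set s" "unconfined_in i s"
  obtains p q where "single_crossing n i p q w" "q = Suc i \<or> w p = Suc i" "p = i \<or> w q = i"
proof -
  obtain a b where s: "s = a @ i # b"
    using split_list[OF assms(2)] by blast
  note unconf = unconfined_in_append_Cons[OF assms(3)[unfolded s]]
  have word: "is_word n (a @ i # b)" "w = word_perm (a @ i # b)"
    using assms(1) s by (auto simp: reduced_word_def)
  let ?U = "word_perm a" and ?V = "word_perm b"
  define p q where "p = inv ?V i" and "q = inv ?V (Suc i)"
  have crossing: "single_crossing n i p q w"
    unfolding p_def q_def word(2) using single_crossing_word_perm[OF word(1) unconf(1,2)] .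
  have V: "?V permutes {1..n}"
    using word(1) by (intro word_perm_permutes) (simp add: is_word_def)
  have w_p: "w p = ?U (Suc i)" and w_q: "w q = ?U i"
    unfolding p_def q_def word(2) by (simp_all add: word_perm_append permutes_inverses[OF V] sigma_def)
  have "q = Suc i \<or> w p = Suc i"
  proof (cases "Suc i \<in> set b")
    case False
    then have "?V (Suc i) = Suc i"
      using unconf(2) by (intro word_perm_fixed) auto
    then show ?thesis
      unfolding q_def using permutes_inv_eq[OF V] by blast
  next
    case True
    then have "?U (Suc i) = Suc i"
      using unconf(1,3) by (intro word_perm_fixed) auto
    then show ?thesis
      using w_p by simp
  qed
  moreover have "p = i \<or> w q = i"
  proof (cases "i - 1 \<in> set b")
    case False
    then have "?V i = i"
      using unconf(2) by (intro word_perm_fixed) auto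
    then show ?thesis
      unfolding p_def using permutes_inv_eq[OF V] by blast
  next
    case True
    then have "?U i = i"
      using unconf(1,4) by (intro word_perm_fixed) auto
    then show ?thesis
      using w_q by simp
  qed
  ultimately show ?thesis
    using that crossing by blast
qed

theorem proposition3p6:
  fixes n i :: nat and w :: "nat \<Rightarrow> nat"
  assumes "w permutes {1..n}"
    and "prism n w"
    and "i \<in> supp n w"
    and "\<forall>s. reduced_word n w s \<longrightarrow> unconfined_in i s"
    and "i - 1 \<in> supp n w"
    and "i + 1 \<in> supp n w"
  shows "contains_cal_mesh n w [4,1,2,3] (meshR \<union> meshD) {(2, i)} {(2, i)} \<or>
         contains_cal_mesh n w [2,3,4,1] (meshR \<union> meshU) {(2, i)} {(2, i)} \<or>
         contains_cal_mesh n w [3,1,4,2] (meshR \<union> meshU \<union> meshD) {(2, i)} {(2, i)} \<or>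
         contains_cal_mesh n w [2,4,1,3] (meshR \<union> meshU \<union> meshD) {(2, i)} {(2, i)}"
proof -
  obtain s where s: "reduced_word n w s" "i \<in> set s"
    using assms(3) by (auto simp: supp_def)
  obtain p q where "single_crossing n i p q w" "q = Suc i \<or> w p = Suc i" "p = i \<or> w q = i"
    using single_crossing_if_unconfined[OF s] assms(4) s(1) by blast
  moreover have "crosses_level (Suc i) w" "crosses_level (i - 1) w"
    using crosses_level_if_in_supp assms(5,6) by simp_all
  ultimately show ?thesis
    using single_crossing.contains_one_of_four_patterns by blast
qed

end
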